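(* There exists an absolute constant $C>0$ such that for any $\delta\in(0,1)$, if $z_1,\dots,z_n$ are i.i.d. $\mathcal{N}(0,I_d)$ and $n\ge C(d^2+\log^2(1/\delta))$, then with probability at least $1-\delta$, $$\sup_{v\in\mathbb{S}^{d-1}}\frac1n\sum_{i=1}^n(z_i^\top v)^4\le 8.$$
   Context: $\mathbb{S}^{d-1}$ is the unit sphere in $\mathbb{R}^d$. *)

theory Defs
  imports "HOL-Probability.Probability"
begin

definition std_gaussian :: "real measure" where
  "std_gaussian = density lborel std_normal_density"

text \<open>Joint law of n i.i.d. N(0, I_d) vectors z_1..z_n: the sample is
  \<omega> :: nat \<Rightarrow> nat \<Rightarrow> real, with (z_i)_j = \<omega> i j for i < n, j < d.\<close>
definition gaussian_sample :: "nat \<Rightarrow> nat \<Rightarrow> (nat \<Rightarrow> nat \<Rightarrow> real) measure" where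
  "gaussian_sample n d = PiM {..<n} (\<lambda>_. PiM {..<d} (\<lambda>_. std_gaussian))"

end

theory Submission
  imports Defs
begin

text \<open>For a fixed unit vector \<open>u\<close> the projections \<open>z\<^sub>i \<bullet> u\<close> are i.i.d. standard Gaussians,
  and the sum of their fourth powers exceeds \<open>5 n\<close> with probability at most
  \<open>4 exp (- sqrt n / 4608)\<close>: truncating \<open>x\<^sup>4\<close> at a level \<open>a\<close> of order \<open>log\<^sup>2 n\<close> gives a
  Chernoff bound with a linear exponent, and the excess of the untruncated values is controlled
  by the sum of the squares \<open>x\<^sup>2\<close> of the rare large values, whose moment generating function
  is finite at \<open>1/4\<close>.  A grid of mesh \<open>1/(10 sqrt d)\<close> meets the sphere in a net of at most
  \<open>exp (11 d)\<close> points, so a union bound gives the bound \<open>5 n\<close> on the whole net when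
  \<open>sqrt n \<ge> 4608 (13 d + ln (1/\<delta>))\<close>.  Finally \<open>(p + q)\<^sup>4 \<le> (20/19)\<^sup>3 p\<^sup>4 + 20\<^sup>3 q\<^sup>4\<close> transfers
  it from the net to the sphere at the cost of raising \<open>5\<close> to \<open>8\<close>.\<close>

section \<open>Standard Gaussian vectors\<close>

lemma sets_std_gaussian [measurable_cong, simp]: "sets std_gaussian = sets borel"
  by (simp add: std_gaussian_def)

lemma space_std_gaussian [simp]: "space std_gaussian = UNIV"
  by (simp add: std_gaussian_def)

lemma prob_space_std_gaussian: "prob_space std_gaussian"
  unfolding std_gaussian_def using prob_space_normal_density by simp

lemma prob_space_PiM_std_gaussian: "prob_space (PiM J (\<lambda>_. std_gaussian))"
  by (rule prob_space_PiM) (rule prob_space_std_gaussian)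

lemma prob_space_gaussian_sample: "prob_space (gaussian_sample n d)"
  unfolding gaussian_sample_def by (rule prob_space_PiM) (rule prob_space_PiM_std_gaussian)

lemma emeasure_std_gaussian_UNIV: "emeasure std_gaussian UNIV = 1"
  using prob_space.emeasure_space_1[OF prob_space_std_gaussian] by simp

lemma nn_integral_std_gaussian:
  assumes [measurable]: "f \<in> borel_measurable borel"
  shows "(\<integral>\<^sup>+x. f x \<partial>std_gaussian) = (\<integral>\<^sup>+x. ennreal (std_normal_density x) * f x \<partial>lborel)"
  unfolding std_gaussian_def by (subst nn_integral_density) auto

lemma distr_PiM_std_gaussian_component:
  assumes "j \<in> J"
  shows "distr (PiM J (\<lambda>_. std_gaussian)) borel (\<lambda>\<omega>. \<omega> j) = std_gaussian"
proof -
  have "distr (PiM J (\<lambda>_. std_gaussian)) borel (\<lambda>\<omega>. \<omega> j)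
      = distr (PiM J (\<lambda>_. std_gaussian)) std_gaussian (\<lambda>\<omega>. \<omega> j)"
    by (rule distr_cong) auto
  also have "\<dots> = std_gaussian"
    by (rule distr_PiM_component) (auto simp: prob_space_std_gaussian assms)
  finally show ?thesis .
qed

lemma indep_vars_PiM_std_gaussian:
  assumes "J \<noteq> {}"
  shows "prob_space.indep_vars (PiM J (\<lambda>_. std_gaussian)) (\<lambda>_. borel) (\<lambda>j \<omega>. \<omega> j) J"
proof -
  interpret P: prob_space "PiM J (\<lambda>_. std_gaussian)" by (rule prob_space_PiM_std_gaussian)
  have "distr (PiM J (\<lambda>_. std_gaussian)) (PiM J (\<lambda>_. borel)) (\<lambda>x. \<lambda>j\<in>J. x j)
      = distr (PiM J (\<lambda>_. std_gaussian)) (PiM J (\<lambda>_. std_gaussian)) (\<lambda>x. x)"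
    by (rule distr_cong) (auto simp: space_PiM intro!: sets_PiM_cong)
  moreover have "(\<Pi>\<^sub>M j\<in>J. distr (PiM J (\<lambda>_. std_gaussian)) borel (\<lambda>\<omega>. \<omega> j))
      = PiM J (\<lambda>_. std_gaussian)"
    by (rule PiM_cong) (auto simp: distr_PiM_std_gaussian_component)
  ultimately show ?thesis
    by (subst P.indep_vars_iff_distr_eq_PiM'[OF assms]) auto
qed

lemma distributed_unit_combination_std_gaussian:
  assumes "finite J" and unit: "(\<Sum>j\<in>J. (u j)\<^sup>2) = 1"
  shows "distributed (PiM J (\<lambda>_. std_gaussian)) lborel (\<lambda>\<omega>. \<Sum>j\<in>J. \<omega> j * u j)
           std_normal_density"
proof -
  interpret P: prob_space "PiM J (\<lambda>_. std_gaussian)" by (rule prob_space_PiM_std_gaussian)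
  define K where "K = {j\<in>J. u j \<noteq> 0}"
  have KJ: "K \<subseteq> J" and fin_K: "finite K" using assms by (auto simp: K_def)
  have unit_K: "(\<Sum>j\<in>K. (u j)\<^sup>2) = 1"
    using unit by (subst sum.mono_neutral_left[OF assms(1) KJ]) (auto simp: K_def)
  then have "K \<noteq> {}" by auto
  have indep: "P.indep_vars (\<lambda>_. borel) (\<lambda>j \<omega>. u j * \<omega> j) K"
    by (rule P.indep_vars_compose2[OF P.indep_vars_subset[OF indep_vars_PiM_std_gaussian KJ]])
      (use \<open>K \<noteq> {}\<close> KJ in auto)
  have "distributed (PiM J (\<lambda>_. std_gaussian)) lborel (\<lambda>\<omega>. u j * \<omega> j)
          (normal_density 0 \<bar>u j\<bar>)" if "j \<in> K" for j
  proof -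
    have "distributed (PiM J (\<lambda>_. std_gaussian)) lborel (\<lambda>\<omega>. \<omega> j) std_normal_density"
      using distr_PiM_std_gaussian_component[of j J] that KJ
      unfolding distributed_def std_gaussian_def by (auto cong: distr_cong)
    from P.normal_density_affine[OF this, of "u j" 0] show ?thesis
      using that by (auto simp: K_def)
  qed
  then have "distributed (PiM J (\<lambda>_. std_gaussian)) lborel (\<lambda>\<omega>. \<Sum>j\<in>K. u j * \<omega> j)
      (normal_density (\<Sum>j\<in>K. 0) (sqrt (\<Sum>j\<in>K. (\<bar>u j\<bar>)\<^sup>2)))"
    by (intro P.sum_indep_normal[OF fin_K \<open>K \<noteq> {}\<close> indep]) (auto simp: K_def)
  moreover have "(\<lambda>\<omega>. \<Sum>j\<in>K. u j * \<omega> j) = (\<lambda>\<omega>. \<Sum>j\<in>J. \<omega> j * u j)"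
    by (rule ext, subst sum.mono_neutral_left[OF assms(1) KJ]) (auto simp: K_def mult.commute)
  ultimately show ?thesis using unit_K by simp
qed

lemma nn_integral_std_gaussian_even_power:
  "(\<integral>\<^sup>+x. ennreal (x ^ (2 * k)) \<partial>std_gaussian) = ennreal (fact (2 * k) / (2 ^ k * fact k))"
proof -
  have "(\<integral>\<^sup>+x. ennreal (x ^ (2 * k)) \<partial>std_gaussian)
      = (\<integral>\<^sup>+x. ennreal (std_normal_density x * x ^ (2 * k)) \<partial>lborel)"
    by (subst nn_integral_std_gaussian) (auto simp: ennreal_mult')
  also have "\<dots> = ennreal (integral\<^sup>L lborel (\<lambda>x. std_normal_density x * x ^ (2 * k)))"
    using std_normal_moment_even[of k] unfolding has_bochner_integral_iff
    by (intro nn_integral_eq_integral) (auto simp: zero_le_even_power)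
  also have "\<dots> = ennreal (fact (2 * k) / (2 ^ k * fact k))"
    using std_normal_moment_even[of k] has_bochner_integral_integral_eq by metis
  finally show ?thesis .
qed

lemma nn_integral_std_gaussian_power_4: "(\<integral>\<^sup>+x. ennreal (x ^ 4) \<partial>std_gaussian) = 3"
  using nn_integral_std_gaussian_even_power[of 2] by (simp add: fact_numeral)

lemma nn_integral_std_gaussian_power_8: "(\<integral>\<^sup>+x. ennreal (x ^ 8) \<partial>std_gaussian) = 105"
  using nn_integral_std_gaussian_even_power[of 4] by (simp add: fact_numeral)

lemma nn_integral_std_gaussian_exp_square_div_3:
  "(\<integral>\<^sup>+x. ennreal (exp (x\<^sup>2 / 3)) \<partial>std_gaussian) = ennreal (sqrt 3)"
proof -
  have density: "std_normal_density x * exp (x\<^sup>2 / 3) = sqrt 3 * normal_density 0 (sqrt 3) x"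
    for x :: real
  proof -
    have "exp (- x\<^sup>2 / 2) * exp (x\<^sup>2 / 3) = exp (- x\<^sup>2 / 6)"
      by (subst exp_add[symmetric]) (simp add: field_simps)
    moreover have "sqrt 6 = sqrt 2 * sqrt 3" using real_sqrt_mult[of 2 3] by simp
    ultimately show ?thesis
      unfolding std_normal_density_def normal_density_def by (simp add: real_sqrt_mult field_simps)
  qed
  have "(\<integral>\<^sup>+x. ennreal (exp (x\<^sup>2 / 3)) \<partial>std_gaussian)
      = (\<integral>\<^sup>+x. ennreal (sqrt 3) * ennreal (normal_density 0 (sqrt 3) x) \<partial>lborel)"
    by (subst nn_integral_std_gaussian) (auto simp: ennreal_mult'[symmetric] density)
  also have "\<dots> = ennreal (sqrt 3)"
    by (subst nn_integral_cmult) (auto simp: nn_integral_eq_integral)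
  finally show ?thesis .
qed

section \<open>Fourth moments in a fixed direction\<close>

definition dot :: "nat \<Rightarrow> (nat \<Rightarrow> real) \<Rightarrow> (nat \<Rightarrow> real) \<Rightarrow> real" where
  "dot d x u = (\<Sum>j<d. x j * u j)"

definition sqnorm :: "nat \<Rightarrow> (nat \<Rightarrow> real) \<Rightarrow> real" where
  "sqnorm d u = (\<Sum>j<d. (u j)\<^sup>2)"

lemma borel_measurable_dot [measurable]:
  "(\<lambda>x. dot d x u) \<in> borel_measurable (PiM {..<d} (\<lambda>_. std_gaussian))"
  unfolding dot_def by measurable

lemma borel_measurable_gaussian_sample_dot [measurable]:
  "i \<in> {..<n} \<Longrightarrow> (\<lambda>\<omega>. dot d (\<omega> i) u) \<in> borel_measurable (gaussian_sample n d)"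
  unfolding gaussian_sample_def by measurable

lemma nn_integral_dot_unit:
  assumes "sqnorm d u = 1" and [measurable]: "h \<in> borel_measurable borel"
  shows "(\<integral>\<^sup>+x. h (dot d x u) \<partial>PiM {..<d} (\<lambda>_. std_gaussian)) = (\<integral>\<^sup>+x. h x \<partial>std_gaussian)"
proof -
  have "distributed (PiM {..<d} (\<lambda>_. std_gaussian)) lborel (\<lambda>x. dot d x u) std_normal_density"
    using distributed_unit_combination_std_gaussian[of "{..<d}" u] assms(1)
    by (simp add: dot_def sqnorm_def)
  from distributed_nn_integral[OF this, of h] show ?thesis
    by (simp add: nn_integral_std_gaussian)
qed

lemma emeasure_sum_gt_le_mgf:
  assumes unit: "sqnorm d u = 1" and [measurable]: "\<phi> \<in> borel_measurable borel" and "0 \<le> l"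
  shows "emeasure (gaussian_sample n d)
           {\<omega> \<in> space (gaussian_sample n d). t < (\<Sum>i<n. \<phi> (dot d (\<omega> i) u))}
         \<le> ennreal (exp (- l * t)) * (\<integral>\<^sup>+x. ennreal (exp (l * \<phi> x)) \<partial>std_gaussian) ^ n"
proof -
  let ?M = "PiM {..<d} (\<lambda>_. std_gaussian)"
  let ?S = "{\<omega> \<in> space (gaussian_sample n d). t < (\<Sum>i<n. \<phi> (dot d (\<omega> i) u))}"
  let ?bound = "\<lambda>\<omega>. ennreal (exp (- l * t)) * (\<Prod>i<n. ennreal (exp (l * \<phi> (dot d (\<omega> i) u))))"
  interpret product_prob_space "\<lambda>_. ?M"
    unfolding product_prob_space_def product_prob_space_axioms_def product_sigma_finite_def
    using prob_space_PiM_std_gaussian prob_space_imp_sigma_finite by auto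
  have "?S \<in> sets (gaussian_sample n d)" by measurable
  then have "emeasure (gaussian_sample n d) ?S = (\<integral>\<^sup>+\<omega>. indicator ?S \<omega> \<partial>gaussian_sample n d)"
    by simp
  also have "\<dots> \<le> (\<integral>\<^sup>+\<omega>. ?bound \<omega> \<partial>gaussian_sample n d)"
  proof (rule nn_integral_mono)
    fix \<omega>
    have "?bound \<omega> = ennreal (exp (l * ((\<Sum>i<n. \<phi> (dot d (\<omega> i) u)) - t)))"
      by (simp add: prod_ennreal ennreal_mult'[symmetric] exp_sum[symmetric] exp_add[symmetric]
            sum_distrib_left algebra_simps)
    moreover have "1 \<le> exp (l * ((\<Sum>i<n. \<phi> (dot d (\<omega> i) u)) - t))" if "\<omega> \<in> ?S"
      using that \<open>0 \<le> l\<close> by simp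
    ultimately show "indicator ?S \<omega> \<le> ?bound \<omega>"
      by (cases "\<omega> \<in> ?S") auto
  qed
  also have "\<dots> = ennreal (exp (- l * t)) *
      (\<integral>\<^sup>+\<omega>. (\<Prod>i<n. ennreal (exp (l * \<phi> (dot d (\<omega> i) u)))) \<partial>PiM {..<n} (\<lambda>_. ?M))"
    unfolding gaussian_sample_def by (rule nn_integral_cmult) simp
  also have "(\<integral>\<^sup>+\<omega>. (\<Prod>i<n. ennreal (exp (l * \<phi> (dot d (\<omega> i) u)))) \<partial>PiM {..<n} (\<lambda>_. ?M))
      = (\<Prod>i<n. \<integral>\<^sup>+x. ennreal (exp (l * \<phi> (dot d x u))) \<partial>?M)"
    by (rule product_nn_integral_prod) auto
  also have "\<dots> = (\<integral>\<^sup>+x. ennreal (exp (l * \<phi> x)) \<partial>std_gaussian) ^ n"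
    using nn_integral_dot_unit[OF unit, of "\<lambda>x. ennreal (exp (l * \<phi> x))"] by simp
  finally show ?thesis .
qed

lemma nn_integral_std_gaussian_exp_truncated_power_4:
  assumes "0 \<le> l" "0 \<le> a" "l * a \<le> 1"
  shows "(\<integral>\<^sup>+x. ennreal (exp (l * min (x ^ 4) a)) \<partial>std_gaussian) \<le> ennreal (exp (3 * l + 105 * l\<^sup>2))"
proof -
  have pointwise: "exp (l * min (x ^ 4) a) \<le> 1 + l * x ^ 4 + l\<^sup>2 * x ^ 8" for x :: real
  proof -
    have "0 \<le> l * min (x ^ 4) a" using assms by simp
    moreover have "l * min (x ^ 4) a \<le> l * x ^ 4" using assms by (simp add: mult_left_mono)
    moreover have "l * min (x ^ 4) a \<le> 1"
      using assms by (meson order_trans min.cobounded2 mult_left_mono)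
    ultimately have "exp (l * min (x ^ 4) a) \<le> 1 + l * x ^ 4 + (l * x ^ 4)\<^sup>2"
      by (smt (verit) exp_bound power_mono)
    then show ?thesis by (simp add: power_mult_distrib flip: power_mult)
  qed
  have "(\<integral>\<^sup>+x. ennreal (exp (l * min (x ^ 4) a)) \<partial>std_gaussian)
      \<le> (\<integral>\<^sup>+x. ennreal (1 + l * x ^ 4 + l\<^sup>2 * x ^ 8) \<partial>std_gaussian)"
    by (intro nn_integral_mono ennreal_leI pointwise)
  also have "\<dots> = (\<integral>\<^sup>+x. 1 + ennreal l * ennreal (x ^ 4) + ennreal (l\<^sup>2) * ennreal (x ^ 8) \<partial>std_gaussian)"
    using assms by (intro nn_integral_cong)
      (simp add: ennreal_plus ennreal_mult' zero_le_even_power del: ennreal_1)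
  also have "\<dots> = 1 + ennreal l * 3 + ennreal (l\<^sup>2) * 105"
    by (simp add: nn_integral_add nn_integral_cmult nn_integral_std_gaussian_power_4
        nn_integral_std_gaussian_power_8 emeasure_std_gaussian_UNIV)
  also have "\<dots> = ennreal (1 + (3 * l + 105 * l\<^sup>2))"
    using assms by (simp add: ennreal_plus ennreal_mult' ac_simps)
  also have "\<dots> \<le> ennreal (exp (3 * l + 105 * l\<^sup>2))"
    by (intro ennreal_leI exp_ge_add_one_self)
  finally show ?thesis .
qed

definition large_square :: "real \<Rightarrow> real \<Rightarrow> real" where
  "large_square a x = (if a < x ^ 4 then x\<^sup>2 else 0)"

lemma borel_measurable_large_square [measurable]: "large_square a \<in> borel_measurable borel"
  unfolding large_square_def by measurable

lemma nn_integral_std_gaussian_exp_large_square: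
  assumes "0 \<le> a"
  shows "(\<integral>\<^sup>+x. ennreal (exp (1/4 * large_square a x)) \<partial>std_gaussian)
         \<le> ennreal (1 + sqrt 3 * exp (- sqrt a / 12))"
proof -
  have pointwise: "exp (1/4 * large_square a x) \<le> 1 + exp (- sqrt a / 12) * exp (x\<^sup>2 / 3)"
    for x :: real
  proof (cases "a < x ^ 4")
    case True
    then have "sqrt a < sqrt ((x\<^sup>2)\<^sup>2)" using assms by simp
    then have "sqrt a < x\<^sup>2" by (simp only: real_sqrt_abs abs_power2)
    have "exp (x\<^sup>2 / 4) = exp (- x\<^sup>2 / 12) * exp (x\<^sup>2 / 3)"
      by (subst exp_add[symmetric]) (simp add: field_simps)
    also have "\<dots> \<le> exp (- sqrt a / 12) * exp (x\<^sup>2 / 3)"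
      using \<open>sqrt a < x\<^sup>2\<close> by (intro mult_right_mono) auto
    finally show ?thesis using True by (simp add: large_square_def)
  qed (simp add: large_square_def add_increasing2)
  have "(\<integral>\<^sup>+x. ennreal (exp (1/4 * large_square a x)) \<partial>std_gaussian)
      \<le> (\<integral>\<^sup>+x. ennreal (1 + exp (- sqrt a / 12) * exp (x\<^sup>2 / 3)) \<partial>std_gaussian)"
    by (intro nn_integral_mono ennreal_leI pointwise)
  also have "\<dots> = (\<integral>\<^sup>+x. 1 + ennreal (exp (- sqrt a / 12)) * ennreal (exp (x\<^sup>2 / 3)) \<partial>std_gaussian)"
    by (intro nn_integral_cong) (simp add: ennreal_plus ennreal_mult' del: ennreal_1)
  also have "\<dots> = 1 + ennreal (exp (- sqrt a / 12)) * ennreal (sqrt 3)"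
    by (simp add: nn_integral_add nn_integral_cmult nn_integral_std_gaussian_exp_square_div_3
        emeasure_std_gaussian_UNIV)
  also have "\<dots> = ennreal (1 + sqrt 3 * exp (- sqrt a / 12))"
    by (subst ennreal_plus) (auto simp: ennreal_mult'[symmetric] mult.commute)
  finally show ?thesis .
qed

lemma emeasure_truncated_sum_gt:
  assumes unit: "sqnorm d u = 1" and a: "210 \<le> a"
  shows "emeasure (gaussian_sample n d)
           {\<omega> \<in> space (gaussian_sample n d). 4 * real n < (\<Sum>i<n. min ((dot d (\<omega> i) u) ^ 4) a)}
         \<le> ennreal (exp (- (real n / (2 * a))))"
proof -
  have "emeasure (gaussian_sample n d)
           {\<omega> \<in> space (gaussian_sample n d). 4 * real n < (\<Sum>i<n. min ((dot d (\<omega> i) u) ^ 4) a)}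
      \<le> ennreal (exp (- (1/a) * (4 * real n))) *
          (\<integral>\<^sup>+x. ennreal (exp (1/a * min (x ^ 4) a)) \<partial>std_gaussian) ^ n"
    using emeasure_sum_gt_le_mgf[OF unit, of "\<lambda>x. min (x ^ 4) a" "1/a"] a by simp
  also have "\<dots> \<le> ennreal (exp (- (1/a) * (4 * real n))) * ennreal (exp (3/a + 105 * (1/a)\<^sup>2)) ^ n"
    using nn_integral_std_gaussian_exp_truncated_power_4[of "1/a" a] a
    by (intro mult_left_mono power_mono) auto
  also have "\<dots> = ennreal (exp (- (real n / a) * (1 - 105 / a)))"
  proof -
    have "exp (- (1/a) * (4 * real n)) * exp (3/a + 105 * (1/a)\<^sup>2) ^ n
        = exp (- (real n / a) * (1 - 105 / a))"
      using a by (simp add: exp_of_nat_mult[symmetric] exp_add[symmetric] field_simps power2_eq_square)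
    then show ?thesis by (simp add: ennreal_power ennreal_mult'[symmetric])
  qed
  also have "\<dots> \<le> ennreal (exp (- (real n / (2 * a))))"
  proof -
    have "real n / a * (1/2) \<le> real n / a * (1 - 105 / a)"
      using a by (intro mult_left_mono) (auto simp: field_simps)
    then show ?thesis by (intro ennreal_leI) simp
  qed
  finally show ?thesis .
qed

lemma emeasure_large_square_sum_gt:
  assumes unit: "sqnorm d u = 1" and "0 \<le> a" and small: "real n * exp (- sqrt a / 12) \<le> 1/2"
  shows "emeasure (gaussian_sample n d)
           {\<omega> \<in> space (gaussian_sample n d). sqrt (real n) < (\<Sum>i<n. large_square a (dot d (\<omega> i) u))}
         \<le> ennreal (exp (1 - sqrt (real n) / 4))"
proof -
  let ?e = "sqrt 3 * exp (- sqrt a / 12)"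
  have "emeasure (gaussian_sample n d)
           {\<omega> \<in> space (gaussian_sample n d). sqrt (real n) < (\<Sum>i<n. large_square a (dot d (\<omega> i) u))}
      \<le> ennreal (exp (- (1/4) * sqrt (real n))) *
          (\<integral>\<^sup>+x. ennreal (exp (1/4 * large_square a x)) \<partial>std_gaussian) ^ n"
    by (rule emeasure_sum_gt_le_mgf[OF unit]) auto
  also have "\<dots> \<le> ennreal (exp (- (1/4) * sqrt (real n))) * ennreal (1 + ?e) ^ n"
    using nn_integral_std_gaussian_exp_large_square[OF \<open>0 \<le> a\<close>]
    by (intro mult_left_mono power_mono) auto
  also have "\<dots> = ennreal (exp (- (1/4) * sqrt (real n)) * (1 + ?e) ^ n)"
  proof -
    have "0 \<le> 1 + ?e" by simp
    then show ?thesis by (simp only: ennreal_power ennreal_mult'[OF exp_ge_zero])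
  qed
  also have "\<dots> \<le> ennreal (exp (- (1/4) * sqrt (real n)) * exp 1)"
  proof (intro ennreal_leI mult_left_mono)
    have "(1 + ?e) ^ n \<le> exp ?e ^ n"
      by (intro power_mono) (auto simp: add.commute exp_ge_add_one_self)
    also have "\<dots> = exp (sqrt 3 * (real n * exp (- sqrt a / 12)))"
      by (simp add: exp_of_nat_mult[symmetric] mult.left_commute)
    also have "\<dots> \<le> exp 1"
    proof -
      have "sqrt 3 \<le> 2" by (rule real_le_lsqrt) auto
      with small show ?thesis
        by (simp add: mult_mono[of "sqrt 3" 2 "real n * exp (- sqrt a / 12)" "1/2", simplified])
    qed
    finally show "(1 + ?e) ^ n \<le> exp 1" .
  qed simp
  finally show ?thesis by (simp add: exp_add[symmetric])
qed

lemma sum_power2_le_power2_sum: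
  fixes y :: "'a \<Rightarrow> 'b::linordered_semidom"
  assumes "finite I" "\<And>i. i \<in> I \<Longrightarrow> 0 \<le> y i"
  shows "(\<Sum>i\<in>I. (y i)\<^sup>2) \<le> (\<Sum>i\<in>I. y i)\<^sup>2"
proof -
  have "(\<Sum>i\<in>I. (y i)\<^sup>2) \<le> (\<Sum>i\<in>I. y i * (\<Sum>k\<in>I. y k))"
    using assms by (intro sum_mono) (auto simp: power2_eq_square intro!: mult_left_mono member_le_sum)
  also have "\<dots> = (\<Sum>i\<in>I. y i)\<^sup>2" by (simp add: power2_eq_square sum_distrib_right)
  finally show ?thesis .
qed

lemma sum_power_4_gt_cases:
  fixes y :: "nat \<Rightarrow> real"
  assumes "5 * real n < (\<Sum>i<n. (y i) ^ 4)" "0 \<le> a"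
  shows "4 * real n < (\<Sum>i<n. min ((y i) ^ 4) a) \<or> sqrt (real n) < (\<Sum>i<n. large_square a (y i))"
proof (rule ccontr)
  assume "\<not> ?thesis"
  then have small: "(\<Sum>i<n. min ((y i) ^ 4) a) \<le> 4 * real n"
    "(\<Sum>i<n. large_square a (y i)) \<le> sqrt (real n)" by auto
  have "real n < (\<Sum>i<n. (y i) ^ 4 - min ((y i) ^ 4) a)"
    using assms(1) small(1) by (simp add: sum_subtractf)
  also have "\<dots> \<le> (\<Sum>i<n. (large_square a (y i))\<^sup>2)"
    using assms(2) by (intro sum_mono) (simp add: large_square_def flip: power_mult)
  also have "\<dots> \<le> (\<Sum>i<n. large_square a (y i))\<^sup>2"
    by (rule sum_power2_le_power2_sum) (auto simp: large_square_def)
  also have "\<dots> \<le> (sqrt (real n))\<^sup>2"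
    using small(2) by (intro power_mono) (auto simp: large_square_def intro!: sum_nonneg)
  finally show False by simp
qed

lemma power2_ln_add_2_le_sqrt:
  assumes "1 \<le> x"
  shows "(ln (2 * x) + 2)\<^sup>2 \<le> 16 * sqrt x"
proof -
  define s where "s = sqrt (sqrt x)"
  have "1 \<le> s" using assms by (simp add: s_def)
  have "s\<^sup>2 = sqrt x" using assms by (simp add: s_def)
  moreover have "s ^ 4 = (s\<^sup>2)\<^sup>2" by simp
  ultimately have "x = s ^ 4" using assms by simp
  then have "ln (2 * x) = ln 2 + 4 * ln s" using \<open>1 \<le> s\<close> by (simp add: ln_mult ln_realpow)
  also have "\<dots> \<le> 1 + 4 * (s - 1)"
    using ln_le_minus_one[of s] \<open>1 \<le> s\<close> ln_2_less_1 by simp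
  finally have "(ln (2 * x) + 2)\<^sup>2 \<le> (4 * s)\<^sup>2"
    using \<open>1 \<le> s\<close> assms by (intro power_mono) auto
  also have "\<dots> = 16 * sqrt x" using \<open>s\<^sup>2 = sqrt x\<close> by (simp add: power_mult_distrib)
  finally show ?thesis .
qed

lemma truncation_level_bounds:
  assumes "1 \<le> n" and a: "a = 144 * (ln (2 * real n) + 2)\<^sup>2"
  shows "576 \<le> a" "real n * exp (- sqrt a / 12) \<le> 1/2" "sqrt (real n) / 4608 \<le> real n / (2 * a)"
proof -
  have ln_nonneg: "0 \<le> ln (2 * real n)" using assms by simp
  have "2\<^sup>2 \<le> (ln (2 * real n) + 2)\<^sup>2" using ln_nonneg by (intro power_mono) auto
  then show a_ge: "576 \<le> a" by (simp add: a)
  have "sqrt a = 12 * (ln (2 * real n) + 2)"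
    using ln_nonneg by (simp add: a real_sqrt_mult)
  then have "exp (- sqrt a / 12) = exp (-2) / exp (ln (2 * real n))"
    by (simp add: exp_diff[symmetric])
  then have "real n * exp (- sqrt a / 12) = exp (-2) / 2"
    using \<open>1 \<le> n\<close> by simp
  also have "\<dots> \<le> 1/2" by simp
  finally show "real n * exp (- sqrt a / 12) \<le> 1/2" .
  have "a \<le> 2304 * sqrt (real n)"
    using power2_ln_add_2_le_sqrt[of "real n"] assms by simp
  then have "a * sqrt (real n) \<le> 2304 * sqrt (real n) * sqrt (real n)"
    by (intro mult_right_mono) auto
  then have "a * sqrt (real n) \<le> 2304 * real n" by (simp add: mult.assoc)
  then show "sqrt (real n) / 4608 \<le> real n / (2 * a)" using a_ge by (simp add: field_simps)
qed

lemma measure_sum_power_4_gt: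
  assumes unit: "sqnorm d u = 1" and "1 \<le> n"
  shows "measure (gaussian_sample n d)
           {\<omega> \<in> space (gaussian_sample n d). 5 * real n < (\<Sum>i<n. (dot d (\<omega> i) u) ^ 4)}
         \<le> 4 * exp (- sqrt (real n) / 4608)"
proof -
  interpret P: prob_space "gaussian_sample n d" by (rule prob_space_gaussian_sample)
  define a where "a = 144 * (ln (2 * real n) + 2)\<^sup>2"
  note a = truncation_level_bounds[OF \<open>1 \<le> n\<close> a_def]
  define A where "A = {\<omega> \<in> space (gaussian_sample n d). 4 * real n < (\<Sum>i<n. min ((dot d (\<omega> i) u) ^ 4) a)}"
  define B where "B = {\<omega> \<in> space (gaussian_sample n d). sqrt (real n) < (\<Sum>i<n. large_square a (dot d (\<omega> i) u))}"
  have events: "A \<in> P.events" "B \<in> P.events" unfolding A_def B_def by measurable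
  have "P.prob A \<le> exp (- (real n / (2 * a)))"
    using emeasure_truncated_sum_gt[OF unit, of a n] a(1) by (simp add: A_def P.emeasure_eq_measure)
  also have "\<dots> \<le> exp (- sqrt (real n) / 4608)"
    using a(3) by simp
  finally have prob_A: "P.prob A \<le> exp (- sqrt (real n) / 4608)" .
  have "P.prob B \<le> exp (1 - sqrt (real n) / 4)"
    using emeasure_large_square_sum_gt[OF unit _ a(2)] a(1)
    by (simp add: B_def P.emeasure_eq_measure)
  also have "\<dots> = exp 1 * exp (- sqrt (real n) / 4)" by (simp flip: exp_add)
  also have "\<dots> \<le> 3 * exp (- sqrt (real n) / 4608)"
    using exp_le by (intro mult_mono) auto
  finally have prob_B: "P.prob B \<le> 3 * exp (- sqrt (real n) / 4608)" .
  have "{\<omega> \<in> space (gaussian_sample n d). 5 * real n < (\<Sum>i<n. (dot d (\<omega> i) u) ^ 4)} \<subseteq> A \<union> B"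
  proof
    fix \<omega> assume "\<omega> \<in> {\<omega> \<in> space (gaussian_sample n d). 5 * real n < (\<Sum>i<n. (dot d (\<omega> i) u) ^ 4)}"
    then show "\<omega> \<in> A \<union> B"
      using sum_power_4_gt_cases[of n "\<lambda>i. dot d (\<omega> i) u" a] a(1) by (auto simp: A_def B_def)
  qed
  then have "P.prob {\<omega> \<in> space (gaussian_sample n d). 5 * real n < (\<Sum>i<n. (dot d (\<omega> i) u) ^ 4)}
      \<le> P.prob (A \<union> B)"
    using events by (intro P.finite_measure_mono) auto
  also have "\<dots> \<le> P.prob A + P.prob B"
    using events by (intro measure_subadditive) auto
  finally show ?thesis using prob_A prob_B by simp
qed

definition quartic_sum :: "(nat \<Rightarrow> nat \<Rightarrow> real) \<Rightarrow> nat \<Rightarrow> nat \<Rightarrow> (nat \<Rightarrow> real) \<Rightarrow> real" where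
  "quartic_sum \<omega> n d v = (\<Sum>i<n. (dot d (\<omega> i) v) ^ 4)"

lemma sqnorm_nonneg: "0 \<le> sqnorm d w"
  unfolding sqnorm_def by (simp add: sum_nonneg)

lemma sqnorm_scale: "sqnorm d (\<lambda>j. c * w j) = c\<^sup>2 * sqnorm d w"
  unfolding sqnorm_def by (simp add: sum_distrib_left power_mult_distrib)

lemma sqnorm_eq_power2_L2_set: "sqnorm d w = (L2_set w {..<d})\<^sup>2"
  unfolding sqnorm_def L2_set_def by (simp add: sum_nonneg)

lemma quartic_sum_nonneg: "0 \<le> quartic_sum \<omega> n d w"
  unfolding quartic_sum_def by (intro sum_nonneg) (simp add: zero_le_even_power)

lemma quartic_sum_scale: "quartic_sum \<omega> n d (\<lambda>j. c * w j) = c ^ 4 * quartic_sum \<omega> n d w"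
proof -
  have "dot d x (\<lambda>j. c * w j) = c * dot d x w" for x
    by (simp add: dot_def sum_distrib_left mult.left_commute)
  then show ?thesis by (simp add: quartic_sum_def sum_distrib_left power_mult_distrib)
qed

lemma quartic_sum_eq_0: "sqnorm d w = 0 \<Longrightarrow> quartic_sum \<omega> n d w = 0"
  by (simp add: sqnorm_def quartic_sum_def dot_def sum_nonneg_eq_0_iff)

lemma sqnorm_normalize:
  assumes "sqnorm d w \<noteq> 0"
  obtains r x where "0 < r" "sqnorm d x = 1" "w = (\<lambda>j. r * x j)" "(sqnorm d w)\<^sup>2 = r ^ 4"
proof -
  define r where "r = sqrt (sqnorm d w)"
  have "0 < r" using assms sqnorm_nonneg[of d w] by (simp add: r_def)
  have "r\<^sup>2 = sqnorm d w" using sqnorm_nonneg[of d w] by (simp add: r_def)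
  have w: "w = (\<lambda>j. r * (w j / r))" using \<open>0 < r\<close> by simp
  then have "sqnorm d (\<lambda>j. w j / r) = 1"
    using assms \<open>r\<^sup>2 = sqnorm d w\<close> sqnorm_scale[of d r "\<lambda>j. w j / r"] by simp
  moreover have "(sqnorm d w)\<^sup>2 = r ^ 4"
    using \<open>r\<^sup>2 = sqnorm d w\<close> power_mult[of r 2 2] by simp
  ultimately show ?thesis using that \<open>0 < r\<close> w by blast
qed

lemma quartic_sum_le_by_homogeneity:
  assumes sphere: "\<And>x. sqnorm d x = 1 \<Longrightarrow> quartic_sum \<omega> n d x \<le> M"
  shows "quartic_sum \<omega> n d w \<le> (sqnorm d w)\<^sup>2 * M"
proof (cases "sqnorm d w = 0")
  case True
  then show ?thesis by (simp add: quartic_sum_eq_0)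
next
  case False
  then obtain r x where "0 < r" "sqnorm d x = 1" and w: "w = (\<lambda>j. r * x j)"
    and "(sqnorm d w)\<^sup>2 = r ^ 4"
    by (rule sqnorm_normalize)
  then show ?thesis using sphere[of x] by (simp add: quartic_sum_scale)
qed

lemma power2_add_le: "0 < e \<Longrightarrow> (x + y :: real)\<^sup>2 \<le> (1 + e) * x\<^sup>2 + (1 + 1/e) * y\<^sup>2"
proof -
  assume "0 < e"
  then have "(1 + e) * x\<^sup>2 + (1 + 1/e) * y\<^sup>2 - (x + y)\<^sup>2 = (e * x - y)\<^sup>2 / e"
    by (simp add: power2_eq_square field_simps)
  then show ?thesis using \<open>0 < e\<close> by (smt (verit) divide_nonneg_pos zero_le_power2)
qed

lemma power4_add_le:
  assumes "0 < e"
  shows "(p + q :: real) ^ 4 \<le> (1 + e) ^ 3 * p ^ 4 + (1 + 1/e) ^ 3 * q ^ 4"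
proof -
  have "(p + q) ^ 4 = ((p + q)\<^sup>2)\<^sup>2" by simp
  also have "\<dots> \<le> ((1 + e) * p\<^sup>2 + (1 + 1/e) * q\<^sup>2)\<^sup>2"
    using assms by (intro power_mono power2_add_le) auto
  also have "\<dots> \<le> (1 + e) * ((1 + e) * p\<^sup>2)\<^sup>2 + (1 + 1/e) * ((1 + 1/e) * q\<^sup>2)\<^sup>2"
    by (rule power2_add_le[OF assms])
  also have "\<dots> = (1 + e) ^ 3 * p ^ 4 + (1 + 1/e) ^ 3 * q ^ 4"
    by (simp add: power2_eq_square power3_eq_cube power4_eq_xxxx)
  finally show ?thesis .
qed

lemma quartic_sum_add_le:
  assumes "0 < e"
  shows "quartic_sum \<omega> n d v
         \<le> (1 + e) ^ 3 * quartic_sum \<omega> n d u + (1 + 1/e) ^ 3 * quartic_sum \<omega> n d (\<lambda>j. v j - u j)"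
proof -
  have "dot d x v = dot d x u + dot d x (\<lambda>j. v j - u j)" for x
    by (simp add: dot_def sum.distrib[symmetric] algebra_simps)
  then have "quartic_sum \<omega> n d v
      \<le> (\<Sum>i<n. (1 + e) ^ 3 * (dot d (\<omega> i) u) ^ 4 + (1 + 1/e) ^ 3 * (dot d (\<omega> i) (\<lambda>j. v j - u j)) ^ 4)"
    unfolding quartic_sum_def using power4_add_le[OF assms] by (intro sum_mono) simp
  then show ?thesis by (simp add: quartic_sum_def sum.distrib sum_distrib_left)
qed

lemma quartic_sum_le_of_unit:
  assumes "sqnorm d w = 1"
  shows "quartic_sum \<omega> n d w \<le> (\<Sum>i<n. (sqnorm d (\<omega> i))\<^sup>2)"
  unfolding quartic_sum_def
proof (rule sum_mono)
  fix i
  have "(dot d (\<omega> i) w)\<^sup>2 \<le> sqnorm d (\<omega> i) * sqnorm d w"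
    unfolding dot_def sqnorm_def by (rule Cauchy_Schwarz_ineq_sum)
  then have "((dot d (\<omega> i) w)\<^sup>2)\<^sup>2 \<le> (sqnorm d (\<omega> i))\<^sup>2"
    using assms by (intro power_mono) auto
  then show "(dot d (\<omega> i) w) ^ 4 \<le> (sqnorm d (\<omega> i))\<^sup>2" by (simp flip: power_mult)
qed

section \<open>A grid net on the unit sphere\<close>

definition grid_step :: "nat \<Rightarrow> real" where
  "grid_step d = 1 / (10 * sqrt (real d))"

definition grid_point :: "nat \<Rightarrow> (nat \<Rightarrow> int) \<Rightarrow> nat \<Rightarrow> real" where
  "grid_point d m = (\<lambda>j. if j < d then grid_step d * of_int (m j) else 0)"

definition grid_round :: "nat \<Rightarrow> (nat \<Rightarrow> real) \<Rightarrow> nat \<Rightarrow> int" where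
  "grid_round d v = restrict (\<lambda>j. round (v j / grid_step d)) {..<d}"

text \<open>The bounds \<open>11 d\<close> and \<open>111 d\<close> hold for \<open>grid_round d v\<close> with \<open>v\<close> a unit vector:
  its entries are at most \<open>10 d + 1/2\<close> in absolute value and its squared norm is at most
  \<open>100 d (21/20)\<^sup>2\<close>.\<close>
definition grid_net :: "nat \<Rightarrow> (nat \<Rightarrow> int) set" where
  "grid_net d = {m \<in> PiE {..<d} (\<lambda>_. {- int (11 * d) .. int (11 * d)}).
                   (\<Sum>j<d. (real_of_int (m j))\<^sup>2) \<le> 111 * real d}"

lemma finite_grid_net: "finite (grid_net d)"
  unfolding grid_net_def
  by (rule finite_subset[of _ "PiE {..<d} (\<lambda>_. {- int (11 * d) .. int (11 * d)})"])
    (auto intro!: finite_PiE)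

lemma grid_step_pos: "1 \<le> d \<Longrightarrow> 0 < grid_step d"
  by (simp add: grid_step_def)

lemma power2_grid_step: "(grid_step d)\<^sup>2 = 1 / (100 * real d)"
  by (simp add: grid_step_def power2_eq_square)

lemma abs_sub_grid_round_le:
  assumes "1 \<le> d" "j < d"
  shows "\<bar>v j - grid_point d (grid_round d v) j\<bar> \<le> grid_step d / 2"
proof -
  let ?h = "grid_step d" and ?x = "v j / grid_step d"
  have h: "0 < ?h" by (rule grid_step_pos[OF assms(1)])
  then have "?h * of_int (round ?x) - v j = ?h * (of_int (round ?x) - ?x)"
    by (simp add: right_diff_distrib)
  then have "\<bar>?h * of_int (round ?x) - v j\<bar> = ?h * \<bar>of_int (round ?x) - ?x\<bar>"
    using h by (simp add: abs_mult)
  also have "\<dots> \<le> ?h * (1/2)"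
    using h by (intro mult_left_mono of_int_round_abs_le) simp
  finally show ?thesis
    using assms by (simp add: grid_point_def grid_round_def abs_minus_commute)
qed

lemma sqnorm_sub_grid_round_le:
  assumes "1 \<le> d"
  shows "sqnorm d (\<lambda>j. v j - grid_point d (grid_round d v) j) \<le> 1/400"
proof -
  have "(v j - grid_point d (grid_round d v) j)\<^sup>2 \<le> (grid_step d / 2)\<^sup>2" if "j < d" for j
    using power_mono[OF abs_sub_grid_round_le[OF assms that] abs_ge_zero, where n=2] by simp
  then have "sqnorm d (\<lambda>j. v j - grid_point d (grid_round d v) j) \<le> (\<Sum>j<d. (grid_step d / 2)\<^sup>2)"
    unfolding sqnorm_def by (intro sum_mono) simp
  also have "\<dots> = 1/400" using assms by (simp add: power_divide power2_grid_step)
  finally show ?thesis .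
qed

lemma sqnorm_grid_point_grid_round_le:
  assumes "1 \<le> d" "sqnorm d v = 1"
  shows "sqnorm d (grid_point d (grid_round d v)) \<le> (21/20)\<^sup>2"
proof -
  let ?u = "grid_point d (grid_round d v)"
  have "(L2_set (\<lambda>j. ?u j - v j) {..<d})\<^sup>2 = sqnorm d (\<lambda>j. v j - ?u j)"
    by (simp add: sqnorm_eq_power2_L2_set[symmetric] sqnorm_def power2_commute)
  also have "\<dots> \<le> (1/20)\<^sup>2"
    using sqnorm_sub_grid_round_le[OF assms(1), of v] by (simp add: power2_eq_square)
  finally have "(L2_set (\<lambda>j. ?u j - v j) {..<d})\<^sup>2 \<le> (1/20)\<^sup>2" .
  then have "L2_set (\<lambda>j. ?u j - v j) {..<d} \<le> 1/20"
    by (rule power2_le_imp_le) simp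
  moreover have "L2_set ?u {..<d} \<le> L2_set v {..<d} + L2_set (\<lambda>j. ?u j - v j) {..<d}"
    using L2_set_triangle_ineq[of v "\<lambda>j. ?u j - v j" "{..<d}"] by simp
  moreover have "L2_set v {..<d} = 1" using assms(2) by (simp add: sqnorm_def L2_set_def)
  ultimately show ?thesis
    unfolding sqnorm_eq_power2_L2_set by (intro power_mono) auto
qed

lemma grid_round_in_grid_net:
  assumes d: "1 \<le> d" and v: "sqnorm d v = 1"
  shows "grid_round d v \<in> grid_net d"
proof -
  have "grid_round d v j \<in> {- int (11 * d) .. int (11 * d)}" if "j < d" for j
  proof -
    have "(v j)\<^sup>2 \<le> sqnorm d v"
      unfolding sqnorm_def using that by (intro member_le_sum) auto
    then have "\<bar>v j\<bar> \<le> 1" using v by (simp add: abs_square_le_1)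
    moreover have "sqrt (real d) \<le> real d" using d by (simp add: real_sqrt_le_iff' power2_eq_square)
    ultimately have "\<bar>v j / grid_step d\<bar> \<le> 10 * real d"
      using mult_mono[of "\<bar>v j\<bar>" 1 "sqrt (real d)" "real d"] by (simp add: grid_step_def abs_mult)
    then have "\<bar>real_of_int (round (v j / grid_step d))\<bar> \<le> real (11 * d)"
      using of_int_round_abs_le[of "v j / grid_step d"] d by linarith
    then show ?thesis using that by (simp add: grid_round_def abs_le_iff)
  qed
  moreover have "(\<Sum>j<d. (real_of_int (grid_round d v j))\<^sup>2) \<le> 111 * real d"
  proof -
    have "(\<Sum>j<d. (real_of_int (grid_round d v j))\<^sup>2)
        = sqnorm d (grid_point d (grid_round d v)) / (grid_step d)\<^sup>2"
      using grid_step_pos[OF d]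
      by (simp add: sqnorm_def grid_point_def sum_divide_distrib power_mult_distrib)
    also have "\<dots> \<le> (21/20)\<^sup>2 * (100 * real d)"
      using sqnorm_grid_point_grid_round_le[OF d v] by (simp add: power2_grid_step mult_right_mono)
    finally show ?thesis by (simp add: power2_eq_square)
  qed
  ultimately show ?thesis by (auto simp: grid_net_def grid_round_def PiE_iff)
qed

lemma sum_inverse_squares_symmetric_le:
  "(\<Sum>k\<in>{- int K..int K} - {0}. 1 / (real_of_int k)\<^sup>2) \<le> 4 - 4 / (real K + 1)"
proof (induction K)
  case 0
  then show ?case by simp
next
  case (Suc K)
  define a where "a = real K + 1"
  have "1 \<le> a" by (simp add: a_def)
  have "{- int (Suc K)..int (Suc K)} - {0}
      = insert (int K + 1) (insert (- (int K + 1)) ({- int K..int K} - {0}))"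
    by auto
  then have "(\<Sum>k\<in>{- int (Suc K)..int (Suc K)} - {0}. 1 / (real_of_int k)\<^sup>2)
      = 2 / a\<^sup>2 + (\<Sum>k\<in>{- int K..int K} - {0}. 1 / (real_of_int k)\<^sup>2)"
    by (simp add: a_def power2_eq_square algebra_simps)
  also have "\<dots> \<le> 2 / a\<^sup>2 + (4 - 4 / a)"
    using Suc.IH by (simp add: a_def)
  also have "\<dots> \<le> 4 - 4 / (a + 1)"
  proof -
    have "2 / a\<^sup>2 = 4 / (a * (2 * a))" by (simp add: power2_eq_square)
    also have "\<dots> \<le> 4 / (a * (a + 1))"
      using \<open>1 \<le> a\<close> by (intro divide_left_mono mult_left_mono mult_pos_pos) auto
    also have "\<dots> = 4 / a - 4 / (a + 1)" using \<open>1 \<le> a\<close> by (simp add: field_simps)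
    finally show ?thesis by simp
  qed
  finally show ?case by (simp add: a_def add.commute)
qed

lemma sum_exp_neg_square_le:
  assumes "0 < c"
  shows "(\<Sum>k\<in>{- int K..int K}. exp (- (real_of_int k)\<^sup>2 / c)) \<le> 1 + 4 * c"
proof -
  have "exp (- (real_of_int k)\<^sup>2 / c) \<le> c * (1 / (real_of_int k)\<^sup>2)" if "k \<noteq> 0" for k
  proof -
    define y where "y = (real_of_int k)\<^sup>2 / c"
    have "0 < y" using that assms by (simp add: y_def)
    have "y \<le> exp y" using exp_ge_add_one_self[of y] by linarith
    then have "exp (- y) \<le> 1 / y" using \<open>0 < y\<close> by (simp add: exp_minus field_simps)
    then show ?thesis by (simp add: y_def)
  qed
  then have "(\<Sum>k\<in>{- int K..int K} - {0}. exp (- (real_of_int k)\<^sup>2 / c))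
      \<le> (\<Sum>k\<in>{- int K..int K} - {0}. c * (1 / (real_of_int k)\<^sup>2))"
    by (intro sum_mono) auto
  also have "\<dots> = c * (\<Sum>k\<in>{- int K..int K} - {0}. 1 / (real_of_int k)\<^sup>2)"
    by (simp add: sum_distrib_left)
  also have "\<dots> \<le> c * 4"
  proof -
    have "(\<Sum>k\<in>{- int K..int K} - {0}. 1 / (real_of_int k)\<^sup>2) \<le> 4"
      using sum_inverse_squares_symmetric_le[of K] by (smt (verit) divide_nonneg_nonneg of_nat_0_le_iff)
    with assms show ?thesis by (intro mult_left_mono) auto
  qed
  finally show ?thesis by (simp add: sum.remove[of _ 0])
qed

text \<open>Every \<open>m\<close> in the net has weight \<open>exp (d - \<parallel>m\<parallel>\<^sup>2 / 111) \<ge> 1\<close>, while the total weight of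
  the integer box factorizes over the coordinates.\<close>
lemma card_grid_net_le: "real (card (grid_net d)) \<le> exp (11 * real d)"
proof -
  let ?K = "int (11 * d)"
  let ?B = "PiE {..<d} (\<lambda>_. {- ?K .. ?K})"
  define w where "w = (\<lambda>m::nat \<Rightarrow> int. exp (real d) * (\<Prod>j<d. exp (- (real_of_int (m j))\<^sup>2 / 111)))"
  have weight_ge_1: "1 \<le> w m" if "m \<in> grid_net d" for m
  proof -
    have "w m = exp (real d + (\<Sum>j<d. - (real_of_int (m j))\<^sup>2 / 111))"
      by (simp add: w_def exp_add exp_sum)
    also have "\<dots> = exp (real d - (\<Sum>j<d. (real_of_int (m j))\<^sup>2) / 111)"
      by (simp add: sum_negf sum_divide_distrib)
    finally show ?thesis using that by (simp add: grid_net_def)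
  qed
  have "real (card (grid_net d)) \<le> (\<Sum>m\<in>grid_net d. w m)"
    using weight_ge_1 sum_mono[of "grid_net d" "\<lambda>_. 1" w] by simp
  also have "\<dots> \<le> (\<Sum>m\<in>?B. w m)"
  proof (rule sum_mono2)
    show "finite ?B" by (intro finite_PiE) auto
    show "grid_net d \<subseteq> ?B" by (auto simp: grid_net_def)
    show "0 \<le> w m" for m by (simp add: w_def prod_nonneg)
  qed
  also have "\<dots> = exp (real d) * (\<Sum>m\<in>?B. \<Prod>j<d. exp (- (real_of_int (m j))\<^sup>2 / 111))"
    by (simp add: w_def sum_distrib_left)
  also have "\<dots> = exp (real d) * (\<Prod>j<d. \<Sum>k\<in>{- ?K .. ?K}. exp (- (real_of_int k)\<^sup>2 / 111))"
    by (subst prod_sum_PiE) auto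
  also have "\<dots> \<le> exp (real d) * 445 ^ d"
  proof -
    have "(\<Prod>j<d. \<Sum>k\<in>{- ?K .. ?K}. exp (- (real_of_int k)\<^sup>2 / 111)) \<le> (\<Prod>j<d. 445)"
      using sum_exp_neg_square_le[of 111 "11 * d"] by (intro prod_mono) (auto intro: sum_nonneg)
    then show ?thesis by simp
  qed
  also have "\<dots> \<le> exp (real d) * exp 10 ^ d"
  proof -
    have "(2::real) ^ 10 \<le> exp 1 ^ 10"
      by (rule power_mono) (use exp_ge_add_one_self[of 1] in auto)
    then have "(445::real) \<le> exp 10" by (simp flip: exp_of_nat_mult)
    then show ?thesis by (intro mult_left_mono power_mono) auto
  qed
  also have "\<dots> = exp (11 * real d)"
    by (simp add: exp_of_nat_mult[symmetric] exp_add[symmetric] mult.commute)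
  finally show ?thesis .
qed

section \<open>From the net to the sphere\<close>

lemma quartic_sum_le_of_grid_net_and_sphere_bound:
  assumes d: "1 \<le> d" and "0 \<le> c" and "0 \<le> M"
    and net: "\<And>m. m \<in> grid_net d \<Longrightarrow>
                quartic_sum \<omega> n d (grid_point d m) \<le> c * (sqnorm d (grid_point d m))\<^sup>2"
    and sphere: "\<And>x. sqnorm d x = 1 \<Longrightarrow> quartic_sum \<omega> n d x \<le> M"
    and x: "sqnorm d x = 1"
  shows "quartic_sum \<omega> n d x \<le> 71/50 * c + M / 20"
proof -
  define u where "u = grid_point d (grid_round d x)"
  have "quartic_sum \<omega> n d x
      \<le> (1 + 1/19) ^ 3 * quartic_sum \<omega> n d u + (1 + 1/(1/19)) ^ 3 * quartic_sum \<omega> n d (\<lambda>j. x j - u j)"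
    by (rule quartic_sum_add_le) simp
  also have "quartic_sum \<omega> n d u \<le> c * ((21/20)\<^sup>2)\<^sup>2"
  proof -
    have "(sqnorm d u)\<^sup>2 \<le> ((21/20)\<^sup>2)\<^sup>2"
      using sqnorm_grid_point_grid_round_le[OF d x] sqnorm_nonneg
      by (intro power_mono) (auto simp: u_def)
    then show ?thesis
      using net[OF grid_round_in_grid_net[OF d x]] \<open>0 \<le> c\<close>
      by (smt (verit) mult_left_mono u_def)
  qed
  also have "quartic_sum \<omega> n d (\<lambda>j. x j - u j) \<le> (sqnorm d (\<lambda>j. x j - u j))\<^sup>2 * M"
    by (rule quartic_sum_le_by_homogeneity[OF sphere])
  also have "\<dots> \<le> (1/400)\<^sup>2 * M"
    using sqnorm_sub_grid_round_le[OF d, of x] sqnorm_nonneg \<open>0 \<le> M\<close>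
    by (intro mult_right_mono power_mono) (auto simp: u_def)
  finally show ?thesis using \<open>0 \<le> c\<close> by (simp add: power2_eq_square power3_eq_cube)
qed

text \<open>Applied to the maximum \<open>M\<close> over the sphere, the previous lemma gives
  \<open>M \<le> 1.42 c + M/20\<close>: the rounding error only enters through \<open>M\<close> itself.\<close>
lemma quartic_sum_unit_le_of_grid_net:
  assumes d: "1 \<le> d" and "0 \<le> c"
    and net: "\<And>m. m \<in> grid_net d \<Longrightarrow>
                quartic_sum \<omega> n d (grid_point d m) \<le> c * (sqnorm d (grid_point d m))\<^sup>2"
    and v: "sqnorm d v = 1"
  shows "quartic_sum \<omega> n d v \<le> 8/5 * c"
proof -
  let ?S = "{x. sqnorm d x = 1}"
  define M where "M = Sup (quartic_sum \<omega> n d ` ?S)"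
  have "bdd_above (quartic_sum \<omega> n d ` ?S)"
    using quartic_sum_le_of_unit by (intro bdd_aboveI) auto
  then have le_M: "quartic_sum \<omega> n d x \<le> M" if "sqnorm d x = 1" for x
    unfolding M_def using that by (intro cSup_upper) auto
  have "sqnorm d (\<lambda>j. if j = 0 then 1 else 0) = (\<Sum>j<d. if j = 0 then 1 else 0)"
    unfolding sqnorm_def by (rule sum.cong) auto
  then have e0: "sqnorm d (\<lambda>j. if j = 0 then 1 else 0) = 1" using d by simp
  then have "0 \<le> M" using le_M quartic_sum_nonneg order_trans by blast
  have "Sup (quartic_sum \<omega> n d ` ?S) \<le> 71/50 * c + M / 20"
    using e0 quartic_sum_le_of_grid_net_and_sphere_bound[OF d \<open>0 \<le> c\<close> \<open>0 \<le> M\<close> net le_M]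
    by (intro cSup_least) auto
  then have "M \<le> 71/50 * c + M / 20" by (simp only: M_def[symmetric])
  then show ?thesis using le_M[OF v] \<open>0 \<le> c\<close> by linarith
qed

lemma borel_measurable_quartic_sum [measurable]:
  "(\<lambda>\<omega>. quartic_sum \<omega> n d w) \<in> borel_measurable (gaussian_sample n d)"
  unfolding quartic_sum_def by measurable

text \<open>Rational vectors are countable, which makes the sphere event a countable intersection.\<close>
definition rat_vector :: "rat list \<Rightarrow> nat \<Rightarrow> real" where
  "rat_vector rs j = of_rat (rs ! j)"

lemma exists_rat_approximations:
  fixes v :: "nat \<Rightarrow> real"
  obtains R :: "nat \<Rightarrow> nat \<Rightarrow> rat" where "\<And>j. (\<lambda>k. of_rat (R k j)) \<longlonglongrightarrow> v j"
proof -
  have "\<forall>k j. \<exists>r::rat. \<bar>of_rat r - v j\<bar> < 1 / real (Suc k)"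
  proof (intro allI)
    fix k j
    obtain q where "q \<in> \<rat>" "v j < q" "q < v j + 1 / real (Suc k)"
      using Rats_dense_in_real[of "v j" "v j + 1 / real (Suc k)"] by auto
    moreover from \<open>q \<in> \<rat>\<close> obtain r where "q = of_rat r" by (auto elim: Rats_cases)
    ultimately show "\<exists>r::rat. \<bar>of_rat r - v j\<bar> < 1 / real (Suc k)"
      by (intro exI[of _ r]) auto
  qed
  then obtain R :: "nat \<Rightarrow> nat \<Rightarrow> rat" where R: "\<And>k j. \<bar>of_rat (R k j) - v j\<bar> < 1 / real (Suc k)"
    by metis
  have "(\<lambda>k. of_rat (R k j) - v j) \<longlonglongrightarrow> 0" for j
    by (rule LIMSEQ_norm_0) (use R in simp)
  then show ?thesis by (metis that Lim_null)
qed

lemma sphere_bound_iff_rat_vectors: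
  "(\<forall>v. sqnorm d v = 1 \<longrightarrow> quartic_sum \<omega> n d v \<le> B) \<longleftrightarrow>
   (\<forall>rs. quartic_sum \<omega> n d (rat_vector rs) \<le> (sqnorm d (rat_vector rs))\<^sup>2 * B)"
proof
  assume "\<forall>v. sqnorm d v = 1 \<longrightarrow> quartic_sum \<omega> n d v \<le> B"
  then show "\<forall>rs. quartic_sum \<omega> n d (rat_vector rs) \<le> (sqnorm d (rat_vector rs))\<^sup>2 * B"
    using quartic_sum_le_by_homogeneity by blast
next
  assume rat: "\<forall>rs. quartic_sum \<omega> n d (rat_vector rs) \<le> (sqnorm d (rat_vector rs))\<^sup>2 * B"
  show "\<forall>v. sqnorm d v = 1 \<longrightarrow> quartic_sum \<omega> n d v \<le> B"
  proof (intro allI impI)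
    fix v assume v: "sqnorm d v = 1"
    obtain R where R: "\<And>j. (\<lambda>k. of_rat (R k j)) \<longlonglongrightarrow> v j"
      using exists_rat_approximations by blast
    define q where "q k = rat_vector (map (R k) [0..<d])" for k
    have q: "(\<lambda>k. q k j) \<longlonglongrightarrow> v j" if "j < d" for j
      using R[of j] that by (simp add: q_def rat_vector_def)
    have "(\<lambda>k. quartic_sum \<omega> n d (q k)) \<longlonglongrightarrow> quartic_sum \<omega> n d v"
      unfolding quartic_sum_def dot_def by (intro tendsto_intros) (use q in auto)
    moreover have "(\<lambda>k. (sqnorm d (q k))\<^sup>2 * B) \<longlonglongrightarrow> (sqnorm d v)\<^sup>2 * B"
      unfolding sqnorm_def by (intro tendsto_intros) (use q in auto)
    ultimately have "quartic_sum \<omega> n d v \<le> (sqnorm d v)\<^sup>2 * B"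
      by (rule LIMSEQ_le) (use rat in \<open>auto simp: q_def\<close>)
    then show "quartic_sum \<omega> n d v \<le> B" using v by simp
  qed
qed

lemma sets_sphere_bound:
  "{\<omega> \<in> space (gaussian_sample n d). \<forall>v. sqnorm d v = 1 \<longrightarrow> quartic_sum \<omega> n d v \<le> B}
     \<in> sets (gaussian_sample n d)"
  unfolding sphere_bound_iff_rat_vectors by measurable

section \<open>Union bound over the net\<close>

lemma measure_quartic_sum_gt:
  assumes "1 \<le> n"
  shows "measure (gaussian_sample n d)
           {\<omega> \<in> space (gaussian_sample n d). 5 * real n * (sqnorm d w)\<^sup>2 < quartic_sum \<omega> n d w}
         \<le> 4 * exp (- sqrt (real n) / 4608)"
proof (cases "sqnorm d w = 0")
  case True
  then show ?thesis by (simp add: quartic_sum_eq_0)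
next
  case False
  then obtain r x where "0 < r" "sqnorm d x = 1" "w = (\<lambda>j. r * x j)" "(sqnorm d w)\<^sup>2 = r ^ 4"
    by (rule sqnorm_normalize)
  then have "{\<omega> \<in> space (gaussian_sample n d). 5 * real n * (sqnorm d w)\<^sup>2 < quartic_sum \<omega> n d w}
      = {\<omega> \<in> space (gaussian_sample n d). 5 * real n < (\<Sum>i<n. (dot d (\<omega> i) x) ^ 4)}"
    by (simp add: quartic_sum_scale quartic_sum_def mult.commute)
  then show ?thesis using measure_sum_power_4_gt[OF \<open>sqnorm d x = 1\<close> assms] by simp
qed

lemma measure_grid_net_bound_ge:
  assumes "1 \<le> n"
  shows "1 - exp (11 * real d) * (4 * exp (- sqrt (real n) / 4608))
         \<le> measure (gaussian_sample n d) {\<omega> \<in> space (gaussian_sample n d).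
              \<forall>m\<in>grid_net d. quartic_sum \<omega> n d (grid_point d m) \<le> 5 * real n * (sqnorm d (grid_point d m))\<^sup>2}"
proof -
  interpret P: prob_space "gaussian_sample n d" by (rule prob_space_gaussian_sample)
  define bad where "bad m = {\<omega> \<in> space (gaussian_sample n d).
    5 * real n * (sqnorm d (grid_point d m))\<^sup>2 < quartic_sum \<omega> n d (grid_point d m)}" for m
  have bad_events: "bad m \<in> P.events" for m unfolding bad_def by measurable
  have "P.prob (\<Union>m\<in>grid_net d. bad m) \<le> (\<Sum>m\<in>grid_net d. P.prob (bad m))"
    using finite_grid_net bad_events by (intro P.finite_measure_subadditive_finite) auto
  also have "\<dots> \<le> (\<Sum>m\<in>grid_net d. 4 * exp (- sqrt (real n) / 4608))"
    unfolding bad_def by (intro sum_mono measure_quartic_sum_gt[OF assms])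
  also have "\<dots> = real (card (grid_net d)) * (4 * exp (- sqrt (real n) / 4608))"
    by simp
  also have "\<dots> \<le> exp (11 * real d) * (4 * exp (- sqrt (real n) / 4608))"
    by (intro mult_right_mono card_grid_net_le) auto
  finally have "1 - exp (11 * real d) * (4 * exp (- sqrt (real n) / 4608))
      \<le> P.prob (space (gaussian_sample n d) - (\<Union>m\<in>grid_net d. bad m))"
    using P.prob_compl finite_grid_net bad_events by (simp add: sets.finite_UN)
  also have "space (gaussian_sample n d) - (\<Union>m\<in>grid_net d. bad m)
      = {\<omega> \<in> space (gaussian_sample n d).
          \<forall>m\<in>grid_net d. quartic_sum \<omega> n d (grid_point d m) \<le> 5 * real n * (sqnorm d (grid_point d m))\<^sup>2}"
    by (auto simp: bad_def not_less)
  finally show ?thesis .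
qed

lemma sqrt_ge_of_sample_size:
  fixes d L :: real
  assumes "4608\<^sup>2 * 170 * (d\<^sup>2 + L\<^sup>2) \<le> n"
  shows "4608 * (13 * d + L) \<le> sqrt n"
proof (rule real_le_rsqrt)
  have "(13 * d + L)\<^sup>2 + (d - 13 * L)\<^sup>2 = 170 * (d\<^sup>2 + L\<^sup>2)"
    by (simp add: power2_eq_square algebra_simps)
  then have "(13 * d + L)\<^sup>2 \<le> 170 * (d\<^sup>2 + L\<^sup>2)"
    by (metis le_add_same_cancel1 zero_le_power2)
  then have "4608\<^sup>2 * (13 * d + L)\<^sup>2 \<le> 4608\<^sup>2 * (170 * (d\<^sup>2 + L\<^sup>2))"
    by (rule mult_left_mono) simp
  moreover have "(4608 * (13 * d + L))\<^sup>2 = 4608\<^sup>2 * (13 * d + L)\<^sup>2"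
    by (simp only: power_mult_distrib)
  ultimately show "(4608 * (13 * d + L))\<^sup>2 \<le> n"
    using assms by (simp only: mult.assoc)
qed

lemma exp_net_failure_le:
  fixes d L s :: real
  assumes "1 \<le> d" and "4608 * (13 * d + L) \<le> s"
  shows "exp (11 * d) * (4 * exp (- s / 4608)) \<le> exp (- L)"
proof -
  have "exp (11 * d) * (4 * exp (- s / 4608)) \<le> exp (11 * d) * (4 * exp (- (13 * d + L)))"
    using assms(2) by (intro mult_left_mono) auto
  also have "\<dots> = 4 * exp (- 2 * d) * exp (- L)"
    by (simp flip: exp_add)
  also have "\<dots> \<le> 1 * exp (- L)"
  proof (intro mult_right_mono)
    have "4 \<le> exp (1::real) ^ 2"
      using power_mono[OF exp_ge_add_one_self[of 1], of 2] by simp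
    also have "exp 1 ^ 2 \<le> exp (2 * d)"
      using assms(1) by (simp flip: exp_of_nat_mult)
    finally show "4 * exp (- 2 * d) \<le> 1" by (simp add: exp_minus field_simps)
  qed simp
  finally show ?thesis by simp
qed

lemma sample_sphere_event_eq:
  assumes "1 \<le> n"
  shows "{\<omega> \<in> space (gaussian_sample n d). \<forall>v::nat \<Rightarrow> real. (\<Sum>j<d. (v j)\<^sup>2) = 1 \<longrightarrow>
            (1 / real n) * (\<Sum>i<n. (\<Sum>j<d. \<omega> i j * v j) ^ 4) \<le> 8}
       = {\<omega> \<in> space (gaussian_sample n d). \<forall>v. sqnorm d v = 1 \<longrightarrow> quartic_sum \<omega> n d v \<le> 8 * real n}"
  using assms by (simp add: sqnorm_def quartic_sum_def dot_def field_simps)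

theorem mainTheorem8:
  shows "\<exists>C::real. C > 0 \<and>
    (\<forall>(d::nat) (n::nat) (\<delta>::real).
       d \<ge> 1 \<longrightarrow> 0 < \<delta> \<longrightarrow> \<delta> < 1 \<longrightarrow>
       real n \<ge> C * (real d ^ 2 + (ln (1 / \<delta>)) ^ 2) \<longrightarrow>
       measure (gaussian_sample n d)
         {\<omega> \<in> space (gaussian_sample n d).
            \<forall>v::nat \<Rightarrow> real. (\<Sum>j<d. (v j)\<^sup>2) = 1 \<longrightarrow>
              (1 / real n) * (\<Sum>i<n. (\<Sum>j<d. \<omega> i j * v j) ^ 4) \<le> 8}
       \<ge> 1 - \<delta>)"
proof (intro exI[of _ "4608\<^sup>2 * 170"] conjI allI impI)
  fix d n :: nat and \<delta> :: real
  assume d: "1 \<le> d" and "0 < \<delta>" "\<delta> < 1"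
    and n: "4608\<^sup>2 * 170 * (real d ^ 2 + (ln (1 / \<delta>)) ^ 2) \<le> real n"
  interpret P: prob_space "gaussian_sample n d" by (rule prob_space_gaussian_sample)
  have "1 \<le> real d ^ 2 + (ln (1 / \<delta>)) ^ 2" using d by (simp add: add_increasing2)
  then have "1 \<le> 4608\<^sup>2 * 170 * (real d ^ 2 + (ln (1 / \<delta>)) ^ 2)" by simp
  then have "1 \<le> n" using n by simp
  have "1 - \<delta> \<le> 1 - exp (11 * real d) * (4 * exp (- sqrt (real n) / 4608))"
    using exp_net_failure_le[OF _ sqrt_ge_of_sample_size[OF n]] d \<open>0 < \<delta>\<close>
    by (simp add: ln_div)
  also have "\<dots> \<le> P.prob {\<omega> \<in> space (gaussian_sample n d).
      \<forall>m\<in>grid_net d. quartic_sum \<omega> n d (grid_point d m) \<le> 5 * real n * (sqnorm d (grid_point d m))\<^sup>2}"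
    by (rule measure_grid_net_bound_ge[OF \<open>1 \<le> n\<close>])
  also have "\<dots> \<le> P.prob {\<omega> \<in> space (gaussian_sample n d).
      \<forall>v. sqnorm d v = 1 \<longrightarrow> quartic_sum \<omega> n d v \<le> 8 * real n}"
    using quartic_sum_unit_le_of_grid_net[OF d, of "5 * real n"]
    by (intro P.finite_measure_mono sets_sphere_bound) (auto simp: mult.commute)
  finally show "1 - \<delta> \<le> P.prob {\<omega> \<in> space (gaussian_sample n d).
      \<forall>v::nat \<Rightarrow> real. (\<Sum>j<d. (v j)\<^sup>2) = 1 \<longrightarrow> (1 / real n) * (\<Sum>i<n. (\<Sum>j<d. \<omega> i j * v j) ^ 4) \<le> 8}"
    by (simp only: sample_sphere_event_eq[OF \<open>1 \<le> n\<close>])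
qed simp

end
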